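(* In the setting described in the context, let $\mathfrak h$ be the single-electron space spanned by $c^\dagger_{r,\uparrow}\Phi_{\rm vac}$, $r\in\Lambda$, and let $\mathfrak h_{\rm L}$ (resp. $\mathfrak h_{\rm U}$) be the subspace spanned by $a^\dagger_{x,\uparrow}\Phi_{\rm vac}$, $x\in\mathcal{E}$ (resp. $b^\dagger_{u,\uparrow}\Phi_{\rm vac}$, $u\in\mathcal{I}$), so that $\mathfrak h=\mathfrak h_{\rm L}\oplus\mathfrak h_{\rm U}$. Then $H$ can be diagonalized within $\mathfrak h_{\rm L}$ and within $\mathfrak h_{\rm U}$ respectively (each is invariant under $H$). Every eigenvalue $\epsilon$ of $H$ in $\mathfrak h_{\rm L}$ satisfies $$-s\{1+(m+\ell_{\rm L})\nu^2\}\le\epsilon\le\min\{0,-s\{1+(m-\ell_{\rm L})\nu^2\}\},$$ and every eigenvalue $\epsilon$ of $H$ in $\mathfrak h_{\rm U}$ satisfies $$\max\{0,t\{1+(n-\ell_{\rm U})\nu^2\}\}\le\epsilon\le t\{1+(n+\ell_{\rm U})\nu^2\}.$$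
   Context: Lattice: fix integers $n,m\ge2$. A basic cell is a set of $n+1$ sites $\{u,x_1,\dots,x_n\}$ ($u$ internal, $x_i$ external). $\Lambda$ is formed from $M$ copies of the basic cell by identifying external sites from $m$ distinct cells as a single site (each external site lies in exactly $m$ cells); internal sites are not identified; $\Lambda$ is connected. $\mathcal{I},\mathcal{E}$ are the sets of internal and external sites; $C_u$ is the cell containing $u\in\mathcal{I}$; $\Lambda_x$ is the union of the $m$ cells containing $x\in\mathcal{E}$. Fermion operators $c_{r,\sigma}$ satisfy canonical anticommutation relations on the Fock space with vacuum $\Phi_{\rm vac}$; $n_{r,\sigma}=c^\dagger_{r,\sigma}c_{r,\sigma}$. Parameters $t,s,U,\nu>0$. $a_{x,\sigma}=c_{x,\sigma}-\nu\sum_{u\in\Lambda_x\cap\mathcal{I}}c_{u,\sigma}$ ($x\in\mathcal{E}$), $b_{u,\sigma}=c_{u,\sigma}+\nu\sum_{x\in C_u\setminus\{u\}}c_{x,\sigma}$ ($u\in\mathcal{I}$). $H=-s\sum_{x\in\mathcal{E},\sigma}a^\dagger_{x,\sigma}a_{x,\sigma}+t\sum_{u\in\mathcal{I},\sigma}b^\dagger_{u,\sigma}b_{u,\sigma}+U\sum_{r\in\Lambda}n_{r,\uparrow}n_{r,\downarrow}$. For $x,y\in\mathcal{E}$, $\ell_{x,y}=|\Lambda_x\cap\Lambda_y\cap\mathcal{I}|$ (number of cells containing both); for $u,v\in\mathcal{I}$, $\ell_{u,v}=|C_u\cap C_v\cap\mathcal{E}|$. $\ell_{\rm L}=\sum_{y\in\mathcal{E},y\ne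 x}\ell_{x,y}$ for $x\in\mathcal{E}$ and $\ell_{\rm U}=\sum_{v\in\mathcal{I},v\ne u}\ell_{u,v}$ for $u\in\mathcal{I}$ (these do not depend on the choice of $x$, resp. $u$). *)

theory Defs
  imports "HOL-Analysis.Analysis"
begin

text \<open>Sites are the elements of a finite type 'n (so Lambda = UNIV).
  I is the set of internal sites, E = - I the external sites, and for u in I,
  C u is the cell containing u (u together with its n external sites).\<close>

definition site_adj :: "'n set \<Rightarrow> ('n \<Rightarrow> 'n set) \<Rightarrow> 'n \<Rightarrow> 'n \<Rightarrow> bool" where
  "site_adj I C r r' \<longleftrightarrow> (r \<in> I \<and> r' \<in> C r) \<or> (r' \<in> I \<and> r \<in> C r')"

definition lattice :: "nat \<Rightarrow> nat \<Rightarrow> 'n::finite set \<Rightarrow> ('n \<Rightarrow> 'n set) \<Rightarrow> bool" where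
  "lattice n m I C \<longleftrightarrow>
     I \<noteq> {} \<and>
     (\<forall>u\<in>I. u \<in> C u \<and> C u - {u} \<subseteq> - I \<and> card (C u - {u}) = n) \<and>
     (\<forall>x\<in>- I. card {u\<in>I. x \<in> C u} = m) \<and>
     (\<forall>r r'. (site_adj I C)\<^sup>*\<^sup>* r r')"

text \<open>Coefficient vectors of a_x^dagger Phi_vac and b_u^dagger Phi_vac in the
  single-electron (spin up) space, identified with real^'n via c_{r,up}^dagger Phi_vac.\<close>

definition avec :: "real \<Rightarrow> 'n set \<Rightarrow> ('n \<Rightarrow> 'n set) \<Rightarrow> 'n \<Rightarrow> real ^ 'n::finite" where
  "avec \<nu> I C x = (\<chi> r. if r = x then 1 else if r \<in> I \<and> x \<in> C r then - \<nu> else 0)"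

definition bvec :: "real \<Rightarrow> ('n \<Rightarrow> 'n set) \<Rightarrow> 'n \<Rightarrow> real ^ 'n::finite" where
  "bvec \<nu> C u = (\<chi> r. if r = u then 1 else if r \<in> C u - {u} then \<nu> else 0)"

text \<open>Action of H on the single-electron space (the Hubbard term vanishes there):
  H = -s sum_x a_x^dagger a_x + t sum_u b_u^dagger b_u.\<close>

definition H1 :: "real \<Rightarrow> real \<Rightarrow> real \<Rightarrow> 'n set \<Rightarrow> ('n \<Rightarrow> 'n set) \<Rightarrow> real ^ 'n::finite \<Rightarrow> real ^ 'n" where
  "H1 s t \<nu> I C v =
     (- s) *\<^sub>R (\<Sum>x\<in>- I. (avec \<nu> I C x \<bullet> v) *\<^sub>R avec \<nu> I C x)
     + t *\<^sub>R (\<Sum>u\<in>I. (bvec \<nu> C u \<bullet> v) *\<^sub>R bvec \<nu> C u)"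

definition ellE :: "'n set \<Rightarrow> ('n \<Rightarrow> 'n set) \<Rightarrow> 'n \<Rightarrow> 'n \<Rightarrow> nat" where
  "ellE I C x y = card {u\<in>I. x \<in> C u \<and> y \<in> C u}"

definition ellI :: "'n set \<Rightarrow> ('n \<Rightarrow> 'n set) \<Rightarrow> 'n \<Rightarrow> 'n \<Rightarrow> nat" where
  "ellI I C u v = card (C u \<inter> C v \<inter> - I)"

definition ellL :: "'n::finite set \<Rightarrow> ('n \<Rightarrow> 'n set) \<Rightarrow> 'n \<Rightarrow> nat" where
  "ellL I C x = (\<Sum>y\<in>- I - {x}. ellE I C x y)"

definition ellU :: "'n::finite set \<Rightarrow> ('n \<Rightarrow> 'n set) \<Rightarrow> 'n \<Rightarrow> nat" where
  "ellU I C u = (\<Sum>v\<in>I - {u}. ellI I C u v)"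

end

theory Submission
  imports Defs
begin

(* The a_x are orthogonal to the b_u, and a vector orthogonal to every b_u is the combination of
  the a_x read off from its external coordinates; so hL and hU are orthogonal complements, both
  invariant under the self-adjoint H, and each has an eigenbasis (spectral theorem on an invariant
  subspace, via maximising the Rayleigh form).
  On hL, in these coordinates, H acts as -s times the Gram matrix a_x . a_y = delta_xy + nu^2 l_xy,
  whose diagonal is 1 + m nu^2. Gershgorin's theorem puts every eigenvalue within s nu^2 l_L of
  -s (1 + m nu^2), and H = -s sum a_x a_x^T is negative semidefinite on hL. Dually on hU with t,
  the b_u and diagonal 1 + n nu^2. Double counting gives l_L = m (n - 1) and l_U = n (m - 1), so
  the Gershgorin radius is the same for every row. *)

lemma quadratic_nonneg_imp_linear_coeff_zero:
  fixes c q :: real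
  assumes nonneg: "\<And>t. 0 \<le> 2 * t * c + t\<^sup>2 * q" and "q \<ge> 0"
  shows "c = 0"
proof (rule ccontr)
  assume "c \<noteq> 0"
  define t where "t = - c / (q + 1)"
  have t: "t * (q + 1) = - c"
    using \<open>q \<ge> 0\<close> unfolding t_def by simp
  have "(q + 1)\<^sup>2 * (2 * t * c + t\<^sup>2 * q) = 2 * (t * (q + 1)) * c * (q + 1) + (t * (q + 1))\<^sup>2 * q"
    by (simp add: power2_eq_square algebra_simps)
  also have "\<dots> = - c\<^sup>2 * (q + 2)"
    unfolding t by (simp add: power2_eq_square algebra_simps)
  also have "\<dots> < 0"
    using \<open>c \<noteq> 0\<close> \<open>q \<ge> 0\<close> by (simp add: mult_pos_pos)
  finally show False
    using nonneg[of t] \<open>q \<ge> 0\<close> by (simp add: mult_less_0_iff)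
qed

lemma self_adjoint_eigenvector_of_max_form:
  fixes f :: "'a::euclidean_space \<Rightarrow> 'a"
  assumes "linear f" and self_adjoint: "\<And>x y. f x \<bullet> y = x \<bullet> f y"
    and "subspace S" and "f ` S \<subseteq> S" and "x \<in> S"
    and max: "\<And>y. y \<in> S \<Longrightarrow> y \<bullet> f y \<le> l * (y \<bullet> y)" and attained: "x \<bullet> f x = l * (x \<bullet> x)"
  shows "f x = l *\<^sub>R x"
proof -
  define y where "y = l *\<^sub>R x - f x"
  have "y \<in> S"
    unfolding y_def using assms(3-5) by (meson image_subset_iff subspace_diff subspace_scale)
  have "0 \<le> 2 * t * (y \<bullet> y) + t\<^sup>2 * (l * (y \<bullet> y) - y \<bullet> f y)" for t
  proof -
    have "x + t *\<^sub>R y \<in> S"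
      using \<open>x \<in> S\<close> \<open>y \<in> S\<close> \<open>subspace S\<close> by (simp add: subspace_add subspace_scale)
    from max[OF this] have "0 \<le> l * ((x + t *\<^sub>R y) \<bullet> (x + t *\<^sub>R y)) - (x + t *\<^sub>R y) \<bullet> (f x + t *\<^sub>R f y)"
      using \<open>linear f\<close> by (simp add: linear_add linear_scale)
    also have "\<dots> = (l * (x \<bullet> x) - x \<bullet> f x) + 2 * t * (l * (x \<bullet> y) - f x \<bullet> y)
        + t\<^sup>2 * (l * (y \<bullet> y) - y \<bullet> f y)"
      using self_adjoint[of x y]
      by (simp add: inner_add_left inner_add_right inner_commute algebra_simps power2_eq_square)
    also have "l * (x \<bullet> y) - f x \<bullet> y = y \<bullet> y"
      unfolding y_def by (simp add: inner_diff_left)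
    finally show ?thesis
      using attained by simp
  qed
  then have "y \<bullet> y = 0"
    by (rule quadratic_nonneg_imp_linear_coeff_zero) (use max[OF \<open>y \<in> S\<close>] in simp)
  then show ?thesis
    unfolding y_def by simp
qed

lemma self_adjoint_eigenvector_exists:
  fixes f :: "'a::euclidean_space \<Rightarrow> 'a"
  assumes "linear f" and self_adjoint: "\<And>x y. f x \<bullet> y = x \<bullet> f y"
    and "subspace S" and "f ` S \<subseteq> S" and "S \<noteq> {0}"
  obtains x e where "x \<in> S" "x \<noteq> 0" "f x = e *\<^sub>R x"
proof -
  obtain z where "z \<in> S" "z \<noteq> 0"
    using \<open>S \<noteq> {0}\<close> \<open>subspace S\<close> subspace_0 by blast
  define K where "K = S \<inter> sphere 0 1"
  have "compact K"
    unfolding K_def by (intro closed_Int_compact closed_subspace \<open>subspace S\<close> compact_sphere)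
  moreover have "(1 / norm z) *\<^sub>R z \<in> K"
    unfolding K_def using \<open>z \<in> S\<close> \<open>z \<noteq> 0\<close> \<open>subspace S\<close> by (auto simp: subspace_scale)
  moreover have "continuous_on K (\<lambda>x. x \<bullet> f x)"
    using \<open>linear f\<close> by (intro continuous_intros linear_continuous_on) (simp add: linear_conv_bounded_linear)
  ultimately obtain x where "x \<in> K" and x_max: "\<And>y. y \<in> K \<Longrightarrow> y \<bullet> f y \<le> x \<bullet> f x"
    using continuous_attains_sup by (metis empty_iff)
  define l where "l = x \<bullet> f x"
  have "x \<in> S" "norm x = 1"
    using \<open>x \<in> K\<close> unfolding K_def by auto
  have "y \<bullet> f y \<le> l * (y \<bullet> y)" if "y \<in> S" for y
  proof (cases "y = 0")
    case True
    then show ?thesis using \<open>linear f\<close> by (simp add: linear_0)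
  next
    case False
    have "(1 / norm y) *\<^sub>R y \<in> K"
      unfolding K_def using that False \<open>subspace S\<close> by (auto simp: subspace_scale)
    from x_max[OF this] have "(y \<bullet> f y) / (norm y)\<^sup>2 \<le> l"
      using \<open>linear f\<close> unfolding l_def by (simp add: linear_scale power2_eq_square)
    then show ?thesis
      using False by (simp add: divide_le_eq power2_norm_eq_inner)
  qed
  moreover have "x \<bullet> f x = l * (x \<bullet> x)"
    using \<open>norm x = 1\<close> unfolding l_def by (simp add: norm_eq_1)
  ultimately have "f x = l *\<^sub>R x"
    by (rule self_adjoint_eigenvector_of_max_form[OF assms(1-4) \<open>x \<in> S\<close>])
  moreover have "x \<noteq> 0"
    using \<open>norm x = 1\<close> by auto
  ultimately show thesis
    using that \<open>x \<in> S\<close> by blast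
qed

lemma self_adjoint_invariant_subspace_eigenbasis:
  fixes f :: "'a::euclidean_space \<Rightarrow> 'a"
  assumes "linear f" and self_adjoint: "\<And>x y. f x \<bullet> y = x \<bullet> f y"
    and "subspace S" and "f ` S \<subseteq> S"
  shows "\<exists>B\<subseteq>S. independent B \<and> span B = S \<and> (\<forall>b\<in>B. \<exists>e. f b = e *\<^sub>R b)"
  using assms(3,4)
proof (induction "dim S" arbitrary: S rule: less_induct)
  case less
  show ?case
  proof (cases "S = {0}")
    case True
    then show ?thesis by (intro exI[of _ "{}"]) (auto simp: independent_empty)
  next
    case False
    obtain x e where "x \<in> S" "x \<noteq> 0" "f x = e *\<^sub>R x"
      using self_adjoint_eigenvector_exists[OF \<open>linear f\<close> self_adjoint less.prems False] .
    define S' where "S' = {y \<in> S. x \<bullet> y = 0}"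
    have "subspace S'"
      using \<open>subspace S\<close> unfolding S'_def subspace_def by (simp add: inner_add_right)
    have "f ` S' \<subseteq> S'"
      using less.prems(2) self_adjoint[of x] \<open>f x = e *\<^sub>R x\<close> unfolding S'_def by (auto simp flip: self_adjoint)
    have "x \<notin> S'"
      using \<open>x \<noteq> 0\<close> unfolding S'_def by simp
    then have "span S' \<subset> span S"
      using \<open>x \<in> S\<close> \<open>subspace S\<close> \<open>subspace S'\<close>
      by (simp add: span_eq_iff[THEN iffD2] psubset_eq) (force simp: S'_def)
    then obtain B' where "B' \<subseteq> S'" "independent B'" "span B' = S'" and eigen: "\<forall>b\<in>B'. \<exists>e. f b = e *\<^sub>R b"
      using less.hyps[OF dim_psubset \<open>subspace S'\<close> \<open>f ` S' \<subseteq> S'\<close>] by blast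
    have "S \<subseteq> span (insert x B')"
    proof
      fix y assume "y \<in> S"
      have "y - ((x \<bullet> y) / (x \<bullet> x)) *\<^sub>R x \<in> S'"
        using \<open>y \<in> S\<close> \<open>x \<in> S\<close> \<open>x \<noteq> 0\<close> \<open>subspace S\<close> unfolding S'_def
        by (simp add: subspace_diff subspace_scale inner_diff_right)
      then show "y \<in> span (insert x B')"
        unfolding span_breakdown_eq \<open>span B' = S'\<close> by blast
    qed
    moreover have "span (insert x B') \<subseteq> S"
      using \<open>x \<in> S\<close> \<open>B' \<subseteq> S'\<close> \<open>subspace S\<close> unfolding S'_def by (intro span_minimal) auto
    moreover have "independent (insert x B')"
      using \<open>independent B'\<close> \<open>x \<notin> S'\<close> \<open>span B' = S'\<close> by (simp add: independent_insertI)
    ultimately show ?thesis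
      using \<open>x \<in> S\<close> \<open>B' \<subseteq> S'\<close> eigen \<open>f x = e *\<^sub>R x\<close> unfolding S'_def
      by (intro exI[of _ "insert x B'"]) auto
  qed
qed

lemma gershgorin_eigenvalue_bound:
  fixes A :: "'i \<Rightarrow> 'i \<Rightarrow> real" and v :: "'i \<Rightarrow> real"
  assumes "finite E" and eigen: "\<And>x. x \<in> E \<Longrightarrow> e * v x = (\<Sum>y\<in>E. A x y * v y)"
    and "\<exists>x\<in>E. v x \<noteq> 0"
  obtains x where "x \<in> E" "\<bar>e - A x x\<bar> \<le> (\<Sum>y\<in>E - {x}. \<bar>A x y\<bar>)"
proof -
  have "Max ((\<lambda>y. \<bar>v y\<bar>) ` E) \<in> (\<lambda>y. \<bar>v y\<bar>) ` E"
    using \<open>finite E\<close> assms(3) by (intro Max_in) auto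
  then obtain x where "x \<in> E" and x_Max: "\<bar>v x\<bar> = Max ((\<lambda>y. \<bar>v y\<bar>) ` E)"
    by auto
  have x_max: "\<bar>v y\<bar> \<le> \<bar>v x\<bar>" if "y \<in> E" for y
    unfolding x_Max using \<open>finite E\<close> that by (intro Max_ge) auto
  have "v x \<noteq> 0"
    using assms(3) x_max by force
  have "(e - A x x) * v x = (\<Sum>y\<in>E - {x}. A x y * v y)"
    using eigen[OF \<open>x \<in> E\<close>] sum.remove[OF \<open>finite E\<close> \<open>x \<in> E\<close>] by (simp add: algebra_simps)
  then have "\<bar>e - A x x\<bar> * \<bar>v x\<bar> = \<bar>\<Sum>y\<in>E - {x}. A x y * v y\<bar>"
    by (metis abs_mult)
  also have "\<dots> \<le> (\<Sum>y\<in>E - {x}. \<bar>A x y\<bar> * \<bar>v y\<bar>)"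
    unfolding abs_mult[symmetric] by (rule sum_abs)
  also have "\<dots> \<le> (\<Sum>y\<in>E - {x}. \<bar>A x y\<bar>) * \<bar>v x\<bar>"
    unfolding sum_distrib_right using x_max by (intro sum_mono mult_left_mono) auto
  finally show thesis
    using that \<open>x \<in> E\<close> \<open>v x \<noteq> 0\<close> by simp
qed

lemma sum_card_filter_swap:
  assumes "finite A" "finite B"
  shows "(\<Sum>a\<in>A. card {b\<in>B. R a b}) = (\<Sum>b\<in>B. card {a\<in>A. R a b})"
proof -
  have "(\<Sum>a\<in>A. card {b\<in>B. R a b}) = (\<Sum>a\<in>A. \<Sum>b\<in>B. if R a b then 1 else 0)"
    using \<open>finite B\<close> by (simp add: sum.inter_filter[symmetric])
  also have "\<dots> = (\<Sum>b\<in>B. \<Sum>a\<in>A. if R a b then 1 else 0)"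
    by (rule sum.swap)
  also have "\<dots> = (\<Sum>b\<in>B. card {a\<in>A. R a b})"
    using \<open>finite A\<close> by (simp add: sum.inter_filter[symmetric])
  finally show ?thesis .
qed

lemma sum_UNIV_indicator:
  fixes g :: "'a::finite \<Rightarrow> 'b::comm_monoid_add"
  shows "(\<Sum>r\<in>UNIV. if r \<in> B then g r else 0) = sum g B"
  using sum.inter_restrict[of UNIV g B] by simp

locale cell_lattice =
  fixes n m :: nat and I :: "'n::finite set" and C :: "'n \<Rightarrow> 'n set" and \<nu> :: real
  assumes lattice: "lattice n m I C"
begin

abbreviation a :: "'n \<Rightarrow> real ^ 'n" where "a \<equiv> avec \<nu> I C"
abbreviation b :: "'n \<Rightarrow> real ^ 'n" where "b \<equiv> bvec \<nu> C"
abbreviation hL :: "(real ^ 'n) set" where "hL \<equiv> span (a ` (- I))"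
abbreviation hU :: "(real ^ 'n) set" where "hU \<equiv> span (b ` I)"
abbreviation H :: "real \<Rightarrow> real \<Rightarrow> real ^ 'n \<Rightarrow> real ^ 'n" where "H s t \<equiv> H1 s t \<nu> I C"

lemma cell_external_sites: "u \<in> I \<Longrightarrow> C u - {u} = C u \<inter> - I"
  and card_cell_external_sites: "u \<in> I \<Longrightarrow> card (C u - {u}) = n"
  and card_cells_containing: "x \<in> - I \<Longrightarrow> card {u \<in> I. x \<in> C u} = m"
  using lattice unfolding lattice_def by auto

lemma avec_external_component: "x \<in> - I \<Longrightarrow> y \<in> - I \<Longrightarrow> a y $ x = (if x = y then 1 else 0)"
  by (simp add: avec_def)

lemma bvec_internal_component: "u \<in> I \<Longrightarrow> w \<in> I \<Longrightarrow> b w $ u = (if u = w then 1 else 0)"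
  using cell_external_sites[of w] by (auto simp: bvec_def)

lemma inner_avec:
  assumes "x \<in> - I"
  shows "a x \<bullet> w = w $ x - \<nu> * (\<Sum>u \<in> {u \<in> I. x \<in> C u}. w $ u)"
proof -
  have "a x \<bullet> w = (\<Sum>r\<in>UNIV. (if r \<in> {x} then w $ r else 0) - \<nu> * (if r \<in> {u \<in> I. x \<in> C u} then w $ r else 0))"
    unfolding inner_vec_def using assms by (intro sum.cong) (auto simp: avec_def)
  then show ?thesis
    by (simp only: sum_subtractf sum_distrib_left[symmetric] sum_UNIV_indicator) simp
qed

lemma inner_bvec:
  assumes "u \<in> I"
  shows "b u \<bullet> w = w $ u + \<nu> * (\<Sum>y \<in> C u - {u}. w $ y)"
proof -
  have "b u \<bullet> w = (\<Sum>r\<in>UNIV. (if r \<in> {u} then w $ r else 0) + \<nu> * (if r \<in> C u - {u} then w $ r else 0))"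
    unfolding inner_vec_def by (intro sum.cong) (auto simp: bvec_def)
  then show ?thesis
    by (simp only: sum.distrib sum_distrib_left[symmetric] sum_UNIV_indicator) simp
qed

lemma gram_avec:
  assumes "x \<in> - I" "y \<in> - I"
  shows "a x \<bullet> a y = (if x = y then 1 else 0) + \<nu>\<^sup>2 * ellE I C x y"
proof -
  have "(\<Sum>u \<in> {u \<in> I. x \<in> C u}. a y $ u) = (\<Sum>u \<in> {u \<in> I. x \<in> C u}. if y \<in> C u then - \<nu> else 0)"
    using assms by (intro sum.cong) (auto simp: avec_def)
  also have "\<dots> = - \<nu> * ellE I C x y"
    by (simp add: sum.If_cases ellE_def Int_def conj_assoc)
  finally show ?thesis
    using assms by (simp add: inner_avec avec_external_component power2_eq_square)
qed

lemma gram_bvec: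
  assumes "u \<in> I" "w \<in> I"
  shows "b u \<bullet> b w = (if u = w then 1 else 0) + \<nu>\<^sup>2 * ellI I C u w"
proof -
  have "(\<Sum>y \<in> C u - {u}. b w $ y) = (\<Sum>y \<in> C u - {u}. if y \<in> C w then \<nu> else 0)"
    using assms cell_external_sites by (intro sum.cong) (auto simp: bvec_def)
  also have "\<dots> = \<nu> * ellI I C u w"
    using cell_external_sites[OF \<open>u \<in> I\<close>] by (simp add: sum.If_cases ellI_def Int_ac)
  finally show ?thesis
    using assms by (simp add: inner_bvec bvec_internal_component power2_eq_square)
qed

lemma ellE_diag: "x \<in> - I \<Longrightarrow> ellE I C x x = m"
  by (simp add: ellE_def card_cells_containing)

lemma ellI_diag: "u \<in> I \<Longrightarrow> ellI I C u u = n"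
  by (simp add: ellI_def cell_external_sites[symmetric] card_cell_external_sites)

lemma ellL_eq:
  assumes "x \<in> - I"
  shows "ellL I C x = m * (n - 1)"
proof -
  have "ellL I C x = (\<Sum>u\<in>I. card {y \<in> - I - {x}. x \<in> C u \<and> y \<in> C u})"
    unfolding ellL_def ellE_def by (rule sum_card_filter_swap) simp_all
  also have "\<dots> = (\<Sum>u\<in>I. if x \<in> C u then n - 1 else 0)"
  proof (intro sum.cong refl)
    fix u assume "u \<in> I"
    have "{y \<in> - I - {x}. x \<in> C u \<and> y \<in> C u} = (if x \<in> C u then C u - {u} - {x} else {})"
      using cell_external_sites[OF \<open>u \<in> I\<close>] by auto
    then show "card {y \<in> - I - {x}. x \<in> C u \<and> y \<in> C u} = (if x \<in> C u then n - 1 else 0)"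
      using assms \<open>u \<in> I\<close> cell_external_sites card_cell_external_sites by auto
  qed
  also have "\<dots> = m * (n - 1)"
    using card_cells_containing[OF assms] by (simp add: sum.If_cases Int_def)
  finally show ?thesis .
qed

lemma ellU_eq:
  assumes "u \<in> I"
  shows "ellU I C u = n * (m - 1)"
proof -
  have "ellU I C u = (\<Sum>w\<in>I - {u}. card {y \<in> C u - {u}. y \<in> C w})"
    unfolding ellU_def ellI_def using cell_external_sites[OF assms]
    by (intro sum.cong refl arg_cong[where f = card]) auto
  also have "\<dots> = (\<Sum>y\<in>C u - {u}. card ({w \<in> I. y \<in> C w} - {u}))"
    by (subst sum_card_filter_swap) (auto intro!: sum.cong arg_cong[where f = card])
  also have "\<dots> = (\<Sum>y\<in>C u - {u}. m - 1)"
    using assms cell_external_sites[OF assms] card_cells_containing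
    by (intro sum.cong refl) (auto simp: card_Diff_singleton_if)
  finally show ?thesis
    using card_cell_external_sites[OF assms] by simp
qed

lemma avec_bvec_orthogonal:
  assumes "x \<in> - I" "u \<in> I"
  shows "b u \<bullet> a x = 0"
proof -
  have "(\<Sum>y \<in> C u - {u}. a x $ y) = (\<Sum>y \<in> C u - {u}. if y = x then 1 else 0)"
    using assms cell_external_sites[OF \<open>u \<in> I\<close>] by (intro sum.cong) (auto simp: avec_def)
  also have "\<dots> = (if x \<in> C u then 1 else 0)"
    using assms by (auto simp: sum.delta')
  moreover have "a x $ u = (if x \<in> C u then - \<nu> else 0)"
    using assms by (auto simp: avec_def)
  ultimately show ?thesis
    using assms by (simp add: inner_bvec)
qed

lemma hL_orthogonal_bvec: "v \<in> hL \<Longrightarrow> u \<in> I \<Longrightarrow> b u \<bullet> v = 0"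
  using orthogonal_to_span[of v "a ` (- I)" "b u"] avec_bvec_orthogonal
  by (auto simp: orthogonal_def)

lemma hU_orthogonal_avec: "v \<in> hU \<Longrightarrow> x \<in> - I \<Longrightarrow> a x \<bullet> v = 0"
  using orthogonal_to_span[of v "b ` I" "a x"] avec_bvec_orthogonal
  by (auto simp: orthogonal_def inner_commute)

lemma hL_inter_hU: "hL \<inter> hU = {0}"
proof -
  have "v = 0" if "v \<in> hL" "v \<in> hU" for v
  proof -
    have "orthogonal v v"
      by (rule orthogonal_to_span[OF that(1)])
        (use hU_orthogonal_avec[OF that(2)] in \<open>auto simp: orthogonal_def inner_commute\<close>)
    then show ?thesis
      by (simp add: orthogonal_def)
  qed
  then show ?thesis
    by (auto simp: span_zero)
qed

lemma expansion_avec: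
  assumes "\<And>u. u \<in> I \<Longrightarrow> b u \<bullet> w = 0"
  shows "w = (\<Sum>x\<in>- I. w $ x *\<^sub>R a x)"
proof (rule vec_eq_iff[THEN iffD2], intro allI)
  fix r
  show "w $ r = (\<Sum>x\<in>- I. w $ x *\<^sub>R a x) $ r"
  proof (cases "r \<in> I")
    case True
    \<comment> \<open>At an internal site the coefficient is fixed by orthogonality to b r.\<close>
    have "(\<Sum>x\<in>- I. w $ x *\<^sub>R a x) $ r = (\<Sum>x\<in>- I. if x \<in> C r - {r} then - \<nu> * w $ x else 0)"
      unfolding sum_component using True by (intro sum.cong) (auto simp: avec_def)
    also have "\<dots> = - \<nu> * (\<Sum>x \<in> C r - {r}. w $ x)"
      using cell_external_sites[OF True] by (simp add: sum.If_cases sum_distrib_left Int_ac)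
    finally show ?thesis
      using assms[OF True] inner_bvec[OF True, of w] by simp
  next
    case False
    then have "(\<Sum>x\<in>- I. w $ x *\<^sub>R a x) $ r = (\<Sum>x\<in>- I. if r = x then w $ x else 0)"
      unfolding sum_component by (intro sum.cong) (auto simp: avec_external_component)
    then show ?thesis
      using False by (simp add: sum.delta)
  qed
qed

lemma expansion_bvec:
  assumes "\<And>x. x \<in> - I \<Longrightarrow> a x \<bullet> w = 0"
  shows "w = (\<Sum>u\<in>I. w $ u *\<^sub>R b u)"
proof (rule vec_eq_iff[THEN iffD2], intro allI)
  fix r
  show "w $ r = (\<Sum>u\<in>I. w $ u *\<^sub>R b u) $ r"
  proof (cases "r \<in> I")
    case True
    then have "(\<Sum>u\<in>I. w $ u *\<^sub>R b u) $ r = (\<Sum>u\<in>I. if r = u then w $ u else 0)"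
      unfolding sum_component by (intro sum.cong) (auto simp: bvec_internal_component)
    then show ?thesis
      using True by (simp add: sum.delta)
  next
    case False
    then have "(\<Sum>u\<in>I. w $ u *\<^sub>R b u) $ r = (\<Sum>u\<in>I. if r \<in> C u then \<nu> * w $ u else 0)"
      unfolding sum_component by (intro sum.cong) (auto simp: bvec_def)
    also have "\<dots> = \<nu> * (\<Sum>u \<in> {u \<in> I. r \<in> C u}. w $ u)"
      by (simp add: sum.If_cases sum_distrib_left Int_def)
    finally show ?thesis
      using assms[of r] inner_avec[of r w] False by simp
  qed
qed

lemma hL_expansion: "v \<in> hL \<Longrightarrow> v = (\<Sum>x\<in>- I. v $ x *\<^sub>R a x)"
  by (rule expansion_avec) (rule hL_orthogonal_bvec)

lemma hU_expansion: "v \<in> hU \<Longrightarrow> v = (\<Sum>u\<in>I. v $ u *\<^sub>R b u)"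
  by (rule expansion_bvec) (rule hU_orthogonal_avec)

lemma hL_plus_hU: "\<exists>p\<in>hL. \<exists>q\<in>hU. w = p + q"
proof -
  obtain q z where "q \<in> hU" and z_orth: "\<And>y. y \<in> hU \<Longrightarrow> orthogonal z y" and "w = q + z"
    using orthogonal_subspace_decomp_exists[of "b ` I" w] by blast
  have "b u \<bullet> z = 0" if "u \<in> I" for u
    using z_orth[of "b u"] that by (auto simp: orthogonal_def inner_commute span_base)
  then have "z = (\<Sum>x\<in>- I. z $ x *\<^sub>R a x)"
    by (rule expansion_avec)
  also have "\<dots> \<in> hL"
    by (intro span_sum span_scale span_base) auto
  finally show ?thesis
    using \<open>q \<in> hU\<close> \<open>w = q + z\<close> by (metis add.commute)
qed

lemma linear_H: "linear (H s t)"
  by (rule linearI)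
    (simp_all add: H1_def inner_add_right scaleR_add_left sum.distrib scaleR_sum_right algebra_simps)

lemma H_self_adjoint: "H s t v \<bullet> w = v \<bullet> H s t w"
proof -
  have form: "H s t v \<bullet> w = - s * (\<Sum>x\<in>- I. (a x \<bullet> v) * (a x \<bullet> w)) + t * (\<Sum>u\<in>I. (b u \<bullet> v) * (b u \<bullet> w))"
    for v w
    by (simp only: H1_def inner_add_left inner_scaleR_left inner_sum_left)
  show ?thesis
    using form[of v w] form[of w v] by (simp add: inner_commute mult.commute)
qed

lemma H_on_hL: "v \<in> hL \<Longrightarrow> H s t v = (- s) *\<^sub>R (\<Sum>x\<in>- I. (a x \<bullet> v) *\<^sub>R a x)"
  by (simp add: H1_def hL_orthogonal_bvec)

lemma H_on_hU: "v \<in> hU \<Longrightarrow> H s t v = t *\<^sub>R (\<Sum>u\<in>I. (b u \<bullet> v) *\<^sub>R b u)"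
  by (simp add: H1_def hU_orthogonal_avec)

lemma H_hL_subset: "H s t ` hL \<subseteq> hL"
  by (auto simp: H_on_hL intro!: span_neg span_scale span_sum span_base[OF imageI])

lemma H_hU_subset: "H s t ` hU \<subseteq> hU"
  by (auto simp: H_on_hU intro!: span_scale span_sum span_base[OF imageI])

lemma H_hL_component:
  assumes "v \<in> hL" "x \<in> - I"
  shows "H s t v $ x = (\<Sum>y\<in>- I. - s * (a x \<bullet> a y) * v $ y)"
proof -
  have "(\<Sum>y\<in>- I. (a y \<bullet> v) *\<^sub>R a y) $ x = (\<Sum>y\<in>- I. if x = y then a y \<bullet> v else 0)"
    unfolding sum_component using assms(2) by (intro sum.cong) (auto simp: avec_external_component)
  then have "H s t v $ x = - s * (a x \<bullet> v)"
    using assms by (simp add: H_on_hL sum.delta)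
  also have "a x \<bullet> v = (\<Sum>y\<in>- I. v $ y * (a x \<bullet> a y))"
    using arg_cong[OF hL_expansion[OF assms(1)], of "inner (a x)"]
    by (simp add: inner_sum_right)
  finally show ?thesis
    by (simp add: sum_distrib_left mult_ac)
qed

lemma H_hU_component:
  assumes "v \<in> hU" "u \<in> I"
  shows "H s t v $ u = (\<Sum>w\<in>I. t * (b u \<bullet> b w) * v $ w)"
proof -
  have "(\<Sum>w\<in>I. (b w \<bullet> v) *\<^sub>R b w) $ u = (\<Sum>w\<in>I. if u = w then b w \<bullet> v else 0)"
    unfolding sum_component using assms(2) by (intro sum.cong) (auto simp: bvec_internal_component)
  then have "H s t v $ u = t * (b u \<bullet> v)"
    using assms by (simp add: H_on_hU sum.delta)
  also have "b u \<bullet> v = (\<Sum>w\<in>I. v $ w * (b u \<bullet> b w))"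
    using arg_cong[OF hU_expansion[OF assms(1)], of "inner (b u)"]
    by (simp add: inner_sum_right)
  finally show ?thesis
    by (simp add: sum_distrib_left mult_ac)
qed

lemma hL_eigenvalue_disc:
  assumes "v \<in> hL" "v \<noteq> 0" "H s t v = e *\<^sub>R v" "x \<in> - I"
  shows "\<bar>e + s * (1 + real m * \<nu>\<^sup>2)\<bar> \<le> \<bar>s\<bar> * \<nu>\<^sup>2 * real (ellL I C x)"
proof -
  have "\<exists>y\<in>- I. v $ y \<noteq> 0"
  proof (rule ccontr)
    assume "\<not> ?thesis"
    then show False
      using hL_expansion[OF assms(1)] \<open>v \<noteq> 0\<close> by simp
  qed
  moreover have "e * v $ y = (\<Sum>z\<in>- I. - s * (a y \<bullet> a z) * v $ z)" if "y \<in> - I" for y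
    using H_hL_component[OF assms(1) that, where s = s and t = t] assms(3) by simp
  ultimately obtain x0 where "x0 \<in> - I"
    and disc: "\<bar>e - - s * (a x0 \<bullet> a x0)\<bar> \<le> (\<Sum>y\<in>- I - {x0}. \<bar>- s * (a x0 \<bullet> a y)\<bar>)"
    using gershgorin_eigenvalue_bound[of "- I" e "\<lambda>y. v $ y" "\<lambda>x y. - s * (a x \<bullet> a y)", OF finite] by blast
  have "(\<Sum>y\<in>- I - {x0}. \<bar>- s * (a x0 \<bullet> a y)\<bar>) = (\<Sum>y\<in>- I - {x0}. \<bar>s\<bar> * \<nu>\<^sup>2 * ellE I C x0 y)"
    using \<open>x0 \<in> - I\<close> by (intro sum.cong) (auto simp: gram_avec abs_mult)
  also have "\<dots> = \<bar>s\<bar> * \<nu>\<^sup>2 * real (ellL I C x0)"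
    by (simp add: ellL_def sum_distrib_left)
  also have "ellL I C x0 = ellL I C x"
    using \<open>x0 \<in> - I\<close> \<open>x \<in> - I\<close> by (simp add: ellL_eq)
  finally show ?thesis
    using disc \<open>x0 \<in> - I\<close> by (simp add: gram_avec ellE_diag algebra_simps)
qed

lemma hU_eigenvalue_disc:
  assumes "v \<in> hU" "v \<noteq> 0" "H s t v = e *\<^sub>R v" "u \<in> I"
  shows "\<bar>e - t * (1 + real n * \<nu>\<^sup>2)\<bar> \<le> \<bar>t\<bar> * \<nu>\<^sup>2 * real (ellU I C u)"
proof -
  have "\<exists>w\<in>I. v $ w \<noteq> 0"
  proof (rule ccontr)
    assume "\<not> ?thesis"
    then show False
      using hU_expansion[OF assms(1)] \<open>v \<noteq> 0\<close> by simp
  qed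
  moreover have "e * v $ w = (\<Sum>z\<in>I. t * (b w \<bullet> b z) * v $ z)" if "w \<in> I" for w
    using H_hU_component[OF assms(1) that, where s = s and t = t] assms(3) by simp
  ultimately obtain u0 where "u0 \<in> I"
    and disc: "\<bar>e - t * (b u0 \<bullet> b u0)\<bar> \<le> (\<Sum>w\<in>I - {u0}. \<bar>t * (b u0 \<bullet> b w)\<bar>)"
    using gershgorin_eigenvalue_bound[of I e "\<lambda>w. v $ w" "\<lambda>u w. t * (b u \<bullet> b w)", OF finite] by blast
  have "(\<Sum>w\<in>I - {u0}. \<bar>t * (b u0 \<bullet> b w)\<bar>) = (\<Sum>w\<in>I - {u0}. \<bar>t\<bar> * \<nu>\<^sup>2 * ellI I C u0 w)"
    using \<open>u0 \<in> I\<close> by (intro sum.cong) (auto simp: gram_bvec abs_mult)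
  also have "\<dots> = \<bar>t\<bar> * \<nu>\<^sup>2 * real (ellU I C u0)"
    by (simp add: ellU_def sum_distrib_left)
  also have "ellU I C u0 = ellU I C u"
    using \<open>u0 \<in> I\<close> \<open>u \<in> I\<close> by (simp add: ellU_eq)
  finally show ?thesis
    using disc \<open>u0 \<in> I\<close> by (simp add: gram_bvec ellI_diag algebra_simps)
qed

lemma hL_eigenvalue_nonpos:
  assumes "s \<ge> 0" "v \<in> hL" "v \<noteq> 0" "H s t v = e *\<^sub>R v"
  shows "e \<le> 0"
proof -
  have "e * (v \<bullet> v) = H s t v \<bullet> v"
    using assms(4) by simp
  also have "\<dots> = - s * (\<Sum>x\<in>- I. (a x \<bullet> v)\<^sup>2)"
    by (simp add: H_on_hL[OF assms(2)] inner_sum_left power2_eq_square)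
  also have "\<dots> \<le> 0"
    using \<open>s \<ge> 0\<close> by (simp add: sum_nonneg)
  finally have "e * (v \<bullet> v) \<le> 0" .
  moreover have "v \<bullet> v > 0"
    using \<open>v \<noteq> 0\<close> by simp
  ultimately show ?thesis
    by (simp add: mult_le_0_iff)
qed

lemma hU_eigenvalue_nonneg:
  assumes "t \<ge> 0" "v \<in> hU" "v \<noteq> 0" "H s t v = e *\<^sub>R v"
  shows "e \<ge> 0"
proof -
  have "e * (v \<bullet> v) = H s t v \<bullet> v"
    using assms(4) by simp
  also have "\<dots> = t * (\<Sum>u\<in>I. (b u \<bullet> v)\<^sup>2)"
    by (simp add: H_on_hU[OF assms(2)] inner_sum_left power2_eq_square)
  also have "\<dots> \<ge> 0"
    using \<open>t \<ge> 0\<close> by (simp add: sum_nonneg)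
  finally have "e * (v \<bullet> v) \<ge> 0" .
  moreover have "v \<bullet> v > 0"
    using \<open>v \<noteq> 0\<close> by simp
  ultimately show ?thesis
    by (simp add: zero_le_mult_iff)
qed

lemma hL_eigenvalue_bounds:
  assumes "s > 0" "v \<in> hL" "v \<noteq> 0" "H s t v = e *\<^sub>R v" "x \<in> - I"
  shows "- s * (1 + (real m + real (ellL I C x)) * \<nu>\<^sup>2) \<le> e
    \<and> e \<le> min 0 (- s * (1 + (real m - real (ellL I C x)) * \<nu>\<^sup>2))"
  using hL_eigenvalue_disc[OF assms(2-5)] hL_eigenvalue_nonpos[OF _ assms(2-4)] \<open>s > 0\<close>
  by (auto simp: abs_le_iff algebra_simps)

lemma hU_eigenvalue_bounds:
  assumes "t > 0" "v \<in> hU" "v \<noteq> 0" "H s t v = e *\<^sub>R v" "u \<in> I"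
  shows "max 0 (t * (1 + (real n - real (ellU I C u)) * \<nu>\<^sup>2)) \<le> e
    \<and> e \<le> t * (1 + (real n + real (ellU I C u)) * \<nu>\<^sup>2)"
  using hU_eigenvalue_disc[OF assms(2-5)] hU_eigenvalue_nonneg[OF _ assms(2-4)] \<open>t > 0\<close>
  by (auto simp: abs_le_iff algebra_simps)

end

theorem proposition1:
  fixes I :: "'n::finite set" and C :: "'n \<Rightarrow> 'n set"
    and n m :: nat and s t U \<nu> :: real
  assumes "n \<ge> 2" and "m \<ge> 2" and "lattice n m I C"
    and "s > 0" and "t > 0" and "U > 0" and "\<nu> > 0"
  shows "let hL = span (avec \<nu> I C ` (- I)); hU = span (bvec \<nu> C ` I); H = H1 s t \<nu> I C in
     (\<forall>v. \<exists>a\<in>hL. \<exists>b\<in>hU. v = a + b) \<and> hL \<inter> hU = {0} \<and>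
     H ` hL \<subseteq> hL \<and> H ` hU \<subseteq> hU \<and>
     (\<exists>B. B \<subseteq> hL \<and> independent B \<and> span B = hL \<and> (\<forall>b\<in>B. \<exists>e. H b = e *\<^sub>R b)) \<and>
     (\<exists>B. B \<subseteq> hU \<and> independent B \<and> span B = hU \<and> (\<forall>b\<in>B. \<exists>e. H b = e *\<^sub>R b)) \<and>
     (\<forall>e v. v \<in> hL \<and> v \<noteq> 0 \<and> H v = e *\<^sub>R v \<longrightarrow>
        (\<forall>x\<in>- I. - s * (1 + (real m + real (ellL I C x)) * \<nu>\<^sup>2) \<le> e \<and>
                  e \<le> min 0 (- s * (1 + (real m - real (ellL I C x)) * \<nu>\<^sup>2)))) \<and>
     (\<forall>e v. v \<in> hU \<and> v \<noteq> 0 \<and> H v = e *\<^sub>R v \<longrightarrow>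
        (\<forall>u\<in>I. max 0 (t * (1 + (real n - real (ellU I C u)) * \<nu>\<^sup>2)) \<le> e \<and>
                 e \<le> t * (1 + (real n + real (ellU I C u)) * \<nu>\<^sup>2)))"
proof -
  interpret cell_lattice n m I C \<nu>
    by (rule cell_lattice.intro) (rule \<open>lattice n m I C\<close>)
  note eigenbasis = self_adjoint_invariant_subspace_eigenbasis[OF linear_H H_self_adjoint subspace_span]
  show ?thesis
    unfolding Let_def
  proof (intro conjI)
    show "\<forall>w. \<exists>p\<in>hL. \<exists>q\<in>hU. w = p + q"
      using hL_plus_hU by blast
    show "hL \<inter> hU = {0}"
      by (rule hL_inter_hU)
    show "H s t ` hL \<subseteq> hL" "H s t ` hU \<subseteq> hU"
      by (rule H_hL_subset H_hU_subset)+
    show "\<exists>B\<subseteq>hL. independent B \<and> span B = hL \<and> (\<forall>b\<in>B. \<exists>e. H s t b = e *\<^sub>R b)"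
      by (rule eigenbasis[OF H_hL_subset])
    show "\<exists>B\<subseteq>hU. independent B \<and> span B = hU \<and> (\<forall>b\<in>B. \<exists>e. H s t b = e *\<^sub>R b)"
      by (rule eigenbasis[OF H_hU_subset])
  qed (blast dest: hL_eigenvalue_bounds[OF \<open>s > 0\<close>] hU_eigenvalue_bounds[OF \<open>t > 0\<close>])+
qed

end
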